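(* Let $(G,E)$ be an undirected weighted graph with nodes $n_1,\dots,n_N$, symmetric nonnegative weights $w_{ij}$, strengths $k_i=\sum_sw_{is}$, $2m=\sum_ik_i>0$, $\gamma\in\mathbb R$, $\hat n\ge1$. For each $\epsilon>0$ let $f^\epsilon$ be a global minimizer over $X=\{f:G\to\mathbb R^{\hat n}\}$ of $$H_\epsilon(f)=\sum_{l=1}^{\hat n}\langle f^{(l)},\mathbf Lf^{(l)}\rangle+\frac{1}{\epsilon^2}\sum_{i=1}^N W_{\mathrm{multi}}(f(n_i))-\gamma\|f-\mathrm{mean}(f)\|_{\ell_2}^2.$$ Then for any sequence $\epsilon_n\to0^+$, any convergent subsequence of $(f^{\epsilon_n})$ converges (in $X\cong\mathbb R^{N\times\hat n}$) to the partition function of a partition that is a global maximizer of the modularity $Q$ among all partitions of $G$ into at most $\hat n$ communities.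
   Context: $\mathbf L=\mathbf D-\mathbf W$ is the graph Laplacian ($\mathbf W=[w_{ij}]$, $\mathbf D=\mathrm{diag}(k_i)$), with $\langle z,\mathbf Lz\rangle=\frac12\sum_{i,j}w_{ij}(z_i-z_j)^2$. $f=(f^{(1)},\dots,f^{(\hat n)})$. $V^{\hat n}=\{\vec e_1,\dots,\vec e_{\hat n}\}$ is the standard basis of $\mathbb R^{\hat n}$; $W_{\mathrm{multi}}(x)=\prod_{l=1}^{\hat n}\|x-\vec e_l\|_{\ell_1}^2$. For $h:G\to\mathbb R$: $\|h\|_{\ell_2}^2=\sum_ik_ih_i^2$, $\mathrm{mean}(h)=\frac1{2m}\sum_ik_ih_i$; for vector-valued $f$, $\|f\|_{\ell_2}^2=\sum_l\|f^{(l)}\|_{\ell_2}^2$ and $\mathrm{mean}$ is componentwise. A partition into at most $\hat n$ communities is an assignment $g_i\in\{1,\dots,\hat n\}$ (communities may be empty); its partition function is $f:G\to V^{\hat n}$, $f(n_i)=\vec e_{g_i}$. Its modularity is $Q(g)=\frac1{2m}\sum_{i,j}\big(w_{ij}-\gamma\frac{k_ik_j}{2m}\big)\delta(g_i,g_j)$, with $\delta(g_i,g_j)=1$ if $g_i=g_j$ and $0$ otherwise. *)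

theory Defs
  imports "HOL-Analysis.Analysis"
begin

text \<open>Nodes are the elements of a finite type 'v; the \<open>n\<^sup>^\<close> components are
  indexed by a finite type 'c (so \<open>n\<^sup>^ = CARD('c) \<ge> 1\<close>).
  A function f : G \<rightarrow> R^n^ is an element of real^'c^'v (\<cong> R^(N \<times> n^)),
  with f $ i $ l = f^(l)(n_i).\<close>

definition strength :: "('v::finite \<Rightarrow> 'v \<Rightarrow> real) \<Rightarrow> 'v \<Rightarrow> real" where
  "strength w i = (\<Sum>s\<in>UNIV. w i s)"

definition total_weight :: "('v::finite \<Rightarrow> 'v \<Rightarrow> real) \<Rightarrow> real" where
  "total_weight w = (\<Sum>i\<in>UNIV. strength w i)"

definition laplacian :: "('v::finite \<Rightarrow> 'v \<Rightarrow> real) \<Rightarrow> real^'v^'v" where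
  "laplacian w = (\<chi> i j. (if i = j then strength w i else 0) - w i j)"

definition std_basis :: "'c::finite \<Rightarrow> real^'c" where
  "std_basis l = (\<chi> j. if j = l then 1 else 0)"

definition l1_norm :: "real^'c::finite \<Rightarrow> real" where
  "l1_norm x = (\<Sum>j\<in>UNIV. \<bar>x $ j\<bar>)"

definition W_multi :: "real^'c::finite \<Rightarrow> real" where
  "W_multi x = (\<Prod>l\<in>UNIV. (l1_norm (x - std_basis l))\<^sup>2)"

definition comp :: "real^'c^'v \<Rightarrow> 'c \<Rightarrow> real^'v" where
  "comp f l = (\<chi> i. f $ i $ l)"

definition wl2sq :: "('v::finite \<Rightarrow> 'v \<Rightarrow> real) \<Rightarrow> real^'v \<Rightarrow> real" where
  "wl2sq w h = (\<Sum>i\<in>UNIV. strength w i * (h $ i)\<^sup>2)"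

definition wmean :: "('v::finite \<Rightarrow> 'v \<Rightarrow> real) \<Rightarrow> real^'v \<Rightarrow> real" where
  "wmean w h = (1 / total_weight w) * (\<Sum>i\<in>UNIV. strength w i * h $ i)"

definition H_eps :: "('v::finite \<Rightarrow> 'v \<Rightarrow> real) \<Rightarrow> real \<Rightarrow> real \<Rightarrow> real^'c::finite^'v \<Rightarrow> real" where
  "H_eps w \<gamma> \<epsilon> f =
     (\<Sum>l\<in>UNIV. comp f l \<bullet> (laplacian w *v comp f l))
     + (1 / \<epsilon>\<^sup>2) * (\<Sum>i\<in>UNIV. W_multi (f $ i))
     - \<gamma> * (\<Sum>l\<in>UNIV. wl2sq w (comp f l - (\<chi> i. wmean w (comp f l))))"

definition partition_fun :: "('v::finite \<Rightarrow> 'c::finite) \<Rightarrow> real^'c^'v" where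
  "partition_fun g = (\<chi> i. std_basis (g i))"

definition modularity :: "('v::finite \<Rightarrow> 'v \<Rightarrow> real) \<Rightarrow> real \<Rightarrow> ('v \<Rightarrow> 'c) \<Rightarrow> real" where
  "modularity w \<gamma> g = (1 / total_weight w) *
     (\<Sum>i\<in>UNIV. \<Sum>j\<in>UNIV. (w i j - \<gamma> * strength w i * strength w j / total_weight w)
        * (if g i = g j then 1 else 0))"

end

theory Submission imports Defs begin

text \<open>Write \<open>H\<^sub>\<epsilon> = T + \<epsilon>\<^sup>-\<^sup>2 P\<close> with \<open>T\<close> the Laplacian-minus-variance part and \<open>P\<close> the
  total double-well penalty. Both are continuous and \<open>P \<ge> 0\<close> vanishes exactly on partition
  functions. Comparing the minimizer with any partition function shows \<open>P(f\<^sup>\<epsilon>) = O(\<epsilon>\<^sup>2)\<close>, so a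
  limit \<open>F\<close> is a partition function, and \<open>T(f\<^sup>\<epsilon>) \<le> T(partition function)\<close> passes to the limit.
  On partition functions \<open>T = 2m(1 - \<gamma>) - 2m Q\<close>, so minimizing \<open>T\<close> maximizes the modularity.\<close>

lemma
  fixes T P :: "'a::t2_space \<Rightarrow> real"
  assumes conv: "X \<longlonglongrightarrow> F"
    and cont: "isCont T F" "isCont P F"
    and P_nonneg: "\<And>x. P x \<ge> 0"
    and e_pos: "\<And>n. e n > 0"
    and e_lim: "e \<longlonglongrightarrow> 0"
    and minimizer: "\<And>n y. T (X n) + P (X n) / (e n)\<^sup>2 \<le> T y + P y / (e n)\<^sup>2"
    and feasible: "P y\<^sub>0 = 0"
  shows penalized_minimizers_limit_feasible: "P F = 0"
    and penalized_minimizers_limit_optimal: "\<And>y. P y = 0 \<Longrightarrow> T F \<le> T y"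
proof -
  have T_lim: "(\<lambda>n. T (X n)) \<longlonglongrightarrow> T F" and P_lim: "(\<lambda>n. P (X n)) \<longlonglongrightarrow> P F"
    using cont conv by (auto intro: isCont_tendsto_compose)
  have T_le: "T (X n) \<le> T y" if "P y = 0" for n y
  proof -
    have "0 \<le> P (X n) / (e n)\<^sup>2"
      using P_nonneg[of "X n"] by simp
    then show ?thesis
      using minimizer[of n y] that by simp
  qed
  have "P (X n) \<le> (e n)\<^sup>2 * (T y\<^sub>0 - T (X n))" for n
    using minimizer[of n y\<^sub>0] feasible e_pos[of n] by (simp add: field_simps)
  moreover have "(\<lambda>n. (e n)\<^sup>2 * (T y\<^sub>0 - T (X n))) \<longlonglongrightarrow> 0\<^sup>2 * (T y\<^sub>0 - T F)"
    by (intro tendsto_intros e_lim T_lim)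
  ultimately have "P F \<le> 0"
    using LIMSEQ_le[OF P_lim] by simp
  then show "P F = 0"
    using P_nonneg[of F] by simp
  show "T F \<le> T y" if "P y = 0" for y
    using LIMSEQ_le[OF T_lim tendsto_const] T_le[OF that] by blast
qed

definition H_quad :: "('v::finite \<Rightarrow> 'v \<Rightarrow> real) \<Rightarrow> real \<Rightarrow> real^'c::finite^'v \<Rightarrow> real" where
  "H_quad w \<gamma> f = (\<Sum>l\<in>UNIV. comp f l \<bullet> (laplacian w *v comp f l))
     - \<gamma> * (\<Sum>l\<in>UNIV. wl2sq w (comp f l - (\<chi> i. wmean w (comp f l))))"

definition W_penalty :: "real^'c::finite^'v::finite \<Rightarrow> real" where
  "W_penalty f = (\<Sum>i\<in>UNIV. W_multi (f $ i))"

lemma H_eps_eq_H_quad_plus_W_penalty: "H_eps w \<gamma> \<epsilon> f = H_quad w \<gamma> f + W_penalty f / \<epsilon>\<^sup>2"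
  by (simp add: H_eps_def H_quad_def W_penalty_def)

lemma isCont_H_quad:
  fixes f :: "real^'c::finite^'v::finite"
  shows "isCont (H_quad w \<gamma>) f"
proof -
  have "continuous_on UNIV (H_quad w \<gamma> :: real^'c^'v \<Rightarrow> real)"
    unfolding H_quad_def comp_def wl2sq_def wmean_def matrix_vector_mult_def inner_vec_def
    by (intro continuous_intros)
  then show ?thesis
    by (simp add: continuous_on_eq_continuous_at)
qed

lemma isCont_W_penalty: "isCont W_penalty f"
  unfolding W_penalty_def W_multi_def l1_norm_def
  by (intro continuous_intros)

lemma W_multi_nonneg: "W_multi x \<ge> 0"
  unfolding W_multi_def by (intro prod_nonneg) auto

lemma W_multi_eq_0_iff: "W_multi x = 0 \<longleftrightarrow> (\<exists>l. x = std_basis l)"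
proof
  assume "W_multi x = 0"
  then obtain l where "(\<Sum>j\<in>UNIV. \<bar>(x - std_basis l) $ j\<bar>) = 0"
    unfolding W_multi_def l1_norm_def by auto
  then have "x = std_basis l"
    by (simp add: sum_nonneg_eq_0_iff vec_eq_iff)
  then show "\<exists>l. x = std_basis l" ..
next
  assume "\<exists>l. x = std_basis l"
  then obtain l where "x = std_basis l" ..
  then have "l1_norm (x - std_basis l) = 0"
    by (simp add: l1_norm_def)
  then show "W_multi x = 0"
    unfolding W_multi_def by (intro prod_zero) auto
qed

lemma W_penalty_nonneg: "W_penalty f \<ge> 0"
  unfolding W_penalty_def by (intro sum_nonneg W_multi_nonneg)

lemma W_penalty_eq_0_iff: "W_penalty f = 0 \<longleftrightarrow> (\<exists>g. f = partition_fun g)"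
proof -
  have "W_penalty f = 0 \<longleftrightarrow> (\<forall>i. \<exists>l. f $ i = std_basis l)"
    unfolding W_penalty_def by (simp add: sum_nonneg_eq_0_iff W_multi_nonneg W_multi_eq_0_iff)
  also have "\<dots> \<longleftrightarrow> (\<exists>g. \<forall>i. f $ i = std_basis (g i))"
    by metis
  also have "\<dots> \<longleftrightarrow> (\<exists>g. f = partition_fun g)"
    by (simp add: partition_fun_def vec_eq_iff)
  finally show ?thesis .
qed

lemma laplacian_quadratic_form:
  "h \<bullet> (laplacian w *v h) = (\<Sum>i\<in>UNIV. strength w i * (h $ i)\<^sup>2) - (\<Sum>i\<in>UNIV. \<Sum>j\<in>UNIV. w i j * h $ i * h $ j)"
proof -
  have row: "(laplacian w *v h) $ i = strength w i * h $ i - (\<Sum>j\<in>UNIV. w i j * h $ j)" for i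
    by (simp add: matrix_vector_mult_def laplacian_def left_diff_distrib sum_subtractf
        if_distrib[where f="\<lambda>x. x * _"] cong: if_cong)
  show ?thesis
    by (simp add: inner_vec_def row right_diff_distrib sum_subtractf sum_distrib_left
        power2_eq_square algebra_simps)
qed

lemma wl2sq_minus_wmean:
  assumes "total_weight w \<noteq> 0"
  shows "wl2sq w (h - (\<chi> i. wmean w h)) =
    (\<Sum>i\<in>UNIV. strength w i * (h $ i)\<^sup>2) - (\<Sum>i\<in>UNIV. strength w i * h $ i)\<^sup>2 / total_weight w"
proof -
  define M where "M = total_weight w"
  define S where "S = (\<Sum>i\<in>UNIV. strength w i * h $ i)"
  have M: "M = (\<Sum>i\<in>UNIV. strength w i)"
    by (simp add: M_def total_weight_def)
  have "wl2sq w (h - (\<chi> i. wmean w h)) =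
      (\<Sum>i\<in>UNIV. strength w i * (h $ i)\<^sup>2 - 2 * (S / M) * (strength w i * h $ i) + (S / M)\<^sup>2 * strength w i)"
    unfolding wl2sq_def wmean_def S_def M_def
    by (intro sum.cong) (auto simp: power2_eq_square algebra_simps)
  also have "\<dots> = (\<Sum>i\<in>UNIV. strength w i * (h $ i)\<^sup>2) - 2 * (S / M) * S + (S / M)\<^sup>2 * M"
    by (simp add: sum.distrib sum_subtractf sum_distrib_left M S_def)
  also have "\<dots> = (\<Sum>i\<in>UNIV. strength w i * (h $ i)\<^sup>2) - S\<^sup>2 / M"
    using assms by (simp add: M_def power2_eq_square field_simps)
  finally show ?thesis
    by (simp add: S_def M_def)
qed

lemma partition_fun_nth: "partition_fun g $ i $ l = (if g i = l then 1 else 0)"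
  by (simp add: partition_fun_def std_basis_def)

lemma sum_partition_fun_mult:
  "(\<Sum>l\<in>UNIV. partition_fun g $ i $ l * partition_fun g $ j $ l) = (if g i = g j then 1 else 0)"
  by (simp add: partition_fun_nth if_distrib[where f="\<lambda>x. x * _"] cong: if_cong)

lemma sum_partition_fun_bilinear:
  "(\<Sum>l\<in>UNIV. \<Sum>i\<in>UNIV. \<Sum>j\<in>UNIV. a i j * partition_fun g $ i $ l * partition_fun g $ j $ l)
    = (\<Sum>i\<in>UNIV. \<Sum>j\<in>UNIV. a i j * (if g i = g j then 1 else 0))"
proof -
  have "(\<Sum>l\<in>UNIV. \<Sum>i\<in>UNIV. \<Sum>j\<in>UNIV. a i j * partition_fun g $ i $ l * partition_fun g $ j $ l)
      = (\<Sum>i\<in>UNIV. \<Sum>j\<in>UNIV. \<Sum>l\<in>UNIV. a i j * partition_fun g $ i $ l * partition_fun g $ j $ l)"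
    by (subst sum.swap, rule sum.cong[OF refl], rule sum.swap)
  then show ?thesis
    by (simp add: mult.assoc sum_distrib_left[symmetric] sum_partition_fun_mult)
qed

lemma sum_partition_fun_weighted_squares:
  "(\<Sum>l\<in>UNIV. \<Sum>i\<in>UNIV. strength w i * (partition_fun g $ i $ l)\<^sup>2) = total_weight w"
proof -
  have "(\<Sum>l\<in>UNIV. \<Sum>i\<in>UNIV. strength w i * (partition_fun g $ i $ l)\<^sup>2)
      = (\<Sum>i\<in>UNIV. strength w i * (\<Sum>l\<in>UNIV. partition_fun g $ i $ l * partition_fun g $ i $ l))"
    by (subst sum.swap) (simp add: sum_distrib_left power2_eq_square)
  then show ?thesis
    by (simp add: sum_partition_fun_mult total_weight_def)
qed

lemma laplacian_energy_partition_fun: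
  "(\<Sum>l\<in>UNIV. comp (partition_fun g) l \<bullet> (laplacian w *v comp (partition_fun g) l))
    = total_weight w - (\<Sum>i\<in>UNIV. \<Sum>j\<in>UNIV. w i j * (if g i = g j then 1 else 0))"
  by (simp add: laplacian_quadratic_form comp_def sum_subtractf sum_partition_fun_weighted_squares
      sum_partition_fun_bilinear)

lemma variance_partition_fun:
  assumes "total_weight w \<noteq> 0"
  shows "(\<Sum>l\<in>UNIV. wl2sq w (comp (partition_fun g) l - (\<chi> i. wmean w (comp (partition_fun g) l))))
    = total_weight w - (\<Sum>i\<in>UNIV. \<Sum>j\<in>UNIV. strength w i * strength w j * (if g i = g j then 1 else 0))
        / total_weight w"
proof -
  have "(\<Sum>i\<in>UNIV. strength w i * partition_fun g $ i $ l)\<^sup>2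
      = (\<Sum>i\<in>UNIV. \<Sum>j\<in>UNIV. (strength w i * strength w j) * partition_fun g $ i $ l * partition_fun g $ j $ l)"
    for l
    unfolding power2_eq_square sum_product by (simp add: algebra_simps)
  then show ?thesis
    by (simp add: wl2sq_minus_wmean[OF assms] comp_def sum_subtractf sum_divide_distrib[symmetric]
        sum_partition_fun_weighted_squares sum_partition_fun_bilinear)
qed

lemma H_quad_partition_fun:
  assumes "total_weight w \<noteq> 0"
  shows "H_quad w \<gamma> (partition_fun g) = total_weight w * (1 - \<gamma> - modularity w \<gamma> g)"
proof -
  have "total_weight w * modularity w \<gamma> g
      = (\<Sum>i\<in>UNIV. \<Sum>j\<in>UNIV. w i j * (if g i = g j then 1 else 0))
        - \<gamma> * (\<Sum>i\<in>UNIV. \<Sum>j\<in>UNIV. strength w i * strength w j * (if g i = g j then 1 else 0))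
          / total_weight w"
    using assms
    by (simp add: modularity_def left_diff_distrib sum_subtractf sum_distrib_left sum_divide_distrib
        mult.assoc)
  then show ?thesis
    using assms
    by (simp add: H_quad_def laplacian_energy_partition_fun variance_partition_fun algebra_simps)
qed

theorem mainTheorem3:
  fixes w :: "'v::finite \<Rightarrow> 'v \<Rightarrow> real"
    and \<gamma> :: real
    and fe :: "real \<Rightarrow> real^'c::finite^'v"
    and eps :: "nat \<Rightarrow> real"
    and r :: "nat \<Rightarrow> nat"
    and F :: "real^'c^'v"
  assumes sym: "\<And>i j. w i j = w j i"
    and nonneg: "\<And>i j. w i j \<ge> 0"
    and pos: "total_weight w > 0"
    and minimizer: "\<And>\<epsilon> (f :: real^'c^'v). \<epsilon> > 0 \<Longrightarrow> H_eps w \<gamma> \<epsilon> (fe \<epsilon>) \<le> H_eps w \<gamma> \<epsilon> f"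
    and eps_pos: "\<And>n. eps n > 0"
    and eps_lim: "eps \<longlonglongrightarrow> 0"
    and subseq: "strict_mono r"
    and conv: "(\<lambda>n. fe (eps (r n))) \<longlonglongrightarrow> F"
  shows "\<exists>g :: 'v \<Rightarrow> 'c. F = partition_fun g \<and>
           (\<forall>g' :: 'v \<Rightarrow> 'c. modularity w \<gamma> g' \<le> modularity w \<gamma> g)"
proof -
  have sub_pos: "\<And>n. eps (r n) > 0"
    using eps_pos by blast
  have sub_lim: "(\<lambda>n. eps (r n)) \<longlonglongrightarrow> 0"
    using LIMSEQ_subseq_LIMSEQ[OF eps_lim subseq] by (simp add: o_def)
  have sub_min: "H_quad w \<gamma> (fe (eps (r n))) + W_penalty (fe (eps (r n))) / (eps (r n))\<^sup>2
      \<le> H_quad w \<gamma> f + W_penalty f / (eps (r n))\<^sup>2" for n and f :: "real^'c^'v"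
    using minimizer[OF sub_pos] by (simp add: H_eps_eq_H_quad_plus_W_penalty)
  have feasible: "W_penalty (partition_fun g) = 0" for g :: "'v \<Rightarrow> 'c"
    using W_penalty_eq_0_iff by blast
  note limit = penalized_minimizers_limit_feasible penalized_minimizers_limit_optimal
  note limit = limit[OF conv isCont_H_quad isCont_W_penalty W_penalty_nonneg sub_pos sub_lim sub_min feasible]
  obtain g where F: "F = partition_fun g"
    using limit(1) W_penalty_eq_0_iff by blast
  have "modularity w \<gamma> g' \<le> modularity w \<gamma> g" for g' :: "'v \<Rightarrow> 'c"
    using limit(2)[OF feasible[of g']] pos
    by (simp add: F H_quad_partition_fun)
  then show ?thesis
    using F by blast
qed

end
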